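(* Fix an instance of MCND and an arbitrary partial aggregation $\mathcal{B}^p$ (see context). (i) If $(\bar x,\bar y)$ is a feasible solution of the LP relaxation of the PA formulation built on $\mathcal{B}^p$, then $(x,y)$ defined by $x_{ij}^{\mathcal{K}_n}=\sum_{b\in\mathcal{B}^p:o_b=n}\sum_{D\in\mathcal{G}_b^{ij}}\bar x_{ij}^D$ for every arc $(i,j)\in\mathcal{A}$ and every node $n$ that is the origin of at least one commodity, and $y_{ij}=\bar y_{ij}$, is a feasible solution of the LP relaxation of the FA formulation, with the same objective value. (ii) There exist an instance and a partial aggregation $\mathcal{B}^p$ for which the LP relaxation of FA has a feasible solution that is not the image under this map of any feasible solution of the LP relaxation of PA built on $\mathcal{B}^p$. (That is, PA is stronger than FA.)
   Context: An instance of MCND consists of a directed graph $G=(\mathcal{N},\mathcal{A})$, a finite set $\mathcal{K}$ of commodities, each $k\in\mathcal{K}$ having an origin $o^k\in\mathcal{N}$, a destination $s^k\in\mathcal{N}$ and a demand $d^k\ge 0$, and for each arc $(i,j)\in\mathcal{A}$ a capacity $u_{ij}$, a per-unit flow cost $c_{ij}$ and a fixed cost $f_{ij}$, all nonnegative. Let $o_i^k=1$ if $i=o^k$ and $0$ otherwise, $s_i^k=1$ if $i=s^k$ and $0$ otherwise, $\mathcal{N}_i^+=\{j:(i,j)\in\mathcal{A}\}$, $\mathcal{N}_i^-=\{j:(j,i)\in\mathcal{A}\}$. Dispersion: a nonempty set $\mathcal{K}_b\subseteq\mathcal{K}$ of commodities sharing a common origin $o_b$, together with, for every arc $(i,j)\in\mathcal{A}$,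 a partition of $\mathcal{K}_b$ into $\mathcal{K}_b^{ij}$ (aggregated on $(i,j)$) and $\mathcal{D}_b^{ij}$ (disaggregated on $(i,j)$); either part may be empty. Let $\mathcal{G}_b^{ij}$ be the family consisting of the set $\mathcal{K}_b^{ij}$ (if nonempty) together with the singletons $\{k\}$, $k\in\mathcal{D}_b^{ij}$. A partial aggregation is a set $\mathcal{B}$ of dispersions such that every $k\in\mathcal{K}$ lies in $\mathcal{K}_b$ for exactly one $b\in\mathcal{B}$. LP relaxation of PA (for $\mathcal{B}$): variables $x_{ij}^D\ge0$ for $(i,j)\in\mathcal{A}$, $b\in\mathcal{B}$, $D\in\mathcal{G}_b^{ij}$ (since the $\mathcal{K}_b$ are disjoint, $D$ determines $b$), and $0\le y_{ij}\le1$; minimize $\sum_{(i,j)}c_{ij}\sum_{b}\sum_{D\in\mathcal{G}_b^{ij}}x_{ij}^D+\sum_{(i,j)}f_{ij}y_{ij}$ subject to: for all $b\in\mathcal{B}$, $i\in\mathcal{N}$: $\sum_{j\in\mathcal{N}_i^+}\sum_{D\in\mathcal{G}_b^{ij}}x_{ij}^D-\sum_{j\in\mathcal{N}_i^-}\sum_{D\in\mathcal{G}_b^{ji}}x_{ji}^D=\sum_{k\in\mathcal{K}_b}(o_i^k-s_i^k)d^k$; for all $(i,j)$: $\sum_b\sum_{D\in\mathcal{G}_b^{ij}}x_{ij}^D\le u_{ij}y_{ij}$; for all $(i,j),b,D\in\mathcal{G}_b^{ij}$: $x_{ij}^D\le(\sum_{k\in D}d^k)y_{ij}$. FA formulation: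 the full aggregation $\mathcal{B}^f$ has one dispersion for each node $n$ that is the origin of at least one commodity, with $\mathcal{K}_n=\{k\in\mathcal{K}:o^k=n\}$, $\mathcal{K}_n^{ij}=\mathcal{K}_n$ and $\mathcal{D}_n^{ij}=\emptyset$ for every arc; the LP relaxation of FA is the LP relaxation of PA for $\mathcal{B}^f$, with variables $x_{ij}^{\mathcal{K}_n}$ and $y_{ij}$. *)

theory Defs
  imports Complex_Main
begin

record ('n, 'k) mcnd =
  nodes :: "'n set"
  arcs  :: "('n \<times> 'n) set"
  comms :: "'k set"
  orig  :: "'k \<Rightarrow> 'n"
  dest  :: "'k \<Rightarrow> 'n"
  dem   :: "'k \<Rightarrow> real"
  cap   :: "'n \<times> 'n \<Rightarrow> real"
  ucost :: "'n \<times> 'n \<Rightarrow> real"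
  fcost :: "'n \<times> 'n \<Rightarrow> real"

definition mcnd_wf :: "('n, 'k) mcnd \<Rightarrow> bool" where
  "mcnd_wf I \<longleftrightarrow> finite (nodes I) \<and> arcs I \<subseteq> nodes I \<times> nodes I \<and> finite (comms I)
     \<and> (\<forall>k\<in>comms I. orig I k \<in> nodes I \<and> dest I k \<in> nodes I \<and> dem I k \<ge> 0)
     \<and> (\<forall>a\<in>arcs I. cap I a \<ge> 0 \<and> ucost I a \<ge> 0 \<and> fcost I a \<ge> 0)"

text \<open>A dispersion: the commodity set K_b together with, for each arc, the aggregated
  part K_b^{ij}; the disaggregated part is D_b^{ij} = K_b - K_b^{ij}.\<close>
type_synonym ('n, 'k) dispersion = "'k set \<times> ('n \<times> 'n \<Rightarrow> 'k set)"

definition dispK :: "('n, 'k) dispersion \<Rightarrow> 'k set" where "dispK b = fst b"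
definition dispAgg :: "('n, 'k) dispersion \<Rightarrow> 'n \<times> 'n \<Rightarrow> 'k set" where "dispAgg b = snd b"

definition is_dispersion :: "('n, 'k) mcnd \<Rightarrow> ('n, 'k) dispersion \<Rightarrow> bool" where
  "is_dispersion I b \<longleftrightarrow> dispK b \<noteq> {} \<and> dispK b \<subseteq> comms I
     \<and> (\<exists>n. \<forall>k\<in>dispK b. orig I k = n)
     \<and> (\<forall>a\<in>arcs I. dispAgg b a \<subseteq> dispK b)"

definition disp_origin :: "('n, 'k) mcnd \<Rightarrow> ('n, 'k) dispersion \<Rightarrow> 'n" where
  "disp_origin I b = orig I (SOME k. k \<in> dispK b)"

definition Gfam :: "('n, 'k) dispersion \<Rightarrow> 'n \<times> 'n \<Rightarrow> 'k set set" where
  "Gfam b a = {D. D = dispAgg b a \<and> D \<noteq> {}} \<union> {{k} | k. k \<in> dispK b - dispAgg b a}"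

definition partial_agg :: "('n, 'k) mcnd \<Rightarrow> ('n, 'k) dispersion set \<Rightarrow> bool" where
  "partial_agg I B \<longleftrightarrow> (\<forall>b\<in>B. is_dispersion I b) \<and> (\<forall>k\<in>comms I. \<exists>!b. b \<in> B \<and> k \<in> dispK b)"

definition bflow :: "('n, 'k) dispersion \<Rightarrow> ('n \<times> 'n \<Rightarrow> 'k set \<Rightarrow> real) \<Rightarrow> 'n \<times> 'n \<Rightarrow> real" where
  "bflow b x a = (\<Sum>D\<in>Gfam b a. x a D)"

definition ind :: "bool \<Rightarrow> real" where "ind P = (if P then 1 else 0)"

definition pa_lp_feasible ::
  "('n, 'k) mcnd \<Rightarrow> ('n, 'k) dispersion set \<Rightarrow> ('n \<times> 'n \<Rightarrow> 'k set \<Rightarrow> real) \<Rightarrow> ('n \<times> 'n \<Rightarrow> real) \<Rightarrow> bool" where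
  "pa_lp_feasible I B x y \<longleftrightarrow>
     (\<forall>a\<in>arcs I. \<forall>b\<in>B. \<forall>D\<in>Gfam b a. x a D \<ge> 0)
   \<and> (\<forall>a\<in>arcs I. 0 \<le> y a \<and> y a \<le> 1)
   \<and> (\<forall>b\<in>B. \<forall>i\<in>nodes I.
        (\<Sum>a\<in>{a\<in>arcs I. fst a = i}. bflow b x a) - (\<Sum>a\<in>{a\<in>arcs I. snd a = i}. bflow b x a)
        = (\<Sum>k\<in>dispK b. (ind (i = orig I k) - ind (i = dest I k)) * dem I k))
   \<and> (\<forall>a\<in>arcs I. (\<Sum>b\<in>B. bflow b x a) \<le> cap I a * y a)
   \<and> (\<forall>a\<in>arcs I. \<forall>b\<in>B. \<forall>D\<in>Gfam b a. x a D \<le> (\<Sum>k\<in>D. dem I k) * y a)"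

definition pa_lp_obj ::
  "('n, 'k) mcnd \<Rightarrow> ('n, 'k) dispersion set \<Rightarrow> ('n \<times> 'n \<Rightarrow> 'k set \<Rightarrow> real) \<Rightarrow> ('n \<times> 'n \<Rightarrow> real) \<Rightarrow> real" where
  "pa_lp_obj I B x y = (\<Sum>a\<in>arcs I. ucost I a * (\<Sum>b\<in>B. bflow b x a)) + (\<Sum>a\<in>arcs I. fcost I a * y a)"

definition origins :: "('n, 'k) mcnd \<Rightarrow> 'n set" where "origins I = orig I ` comms I"

definition Kn :: "('n, 'k) mcnd \<Rightarrow> 'n \<Rightarrow> 'k set" where "Kn I n = {k\<in>comms I. orig I k = n}"

definition full_agg :: "('n, 'k) mcnd \<Rightarrow> ('n, 'k) dispersion set" where
  "full_agg I = {(Kn I n, \<lambda>a. Kn I n) | n. n \<in> origins I}"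

definition pa_to_fa ::
  "('n, 'k) mcnd \<Rightarrow> ('n, 'k) dispersion set \<Rightarrow> ('n \<times> 'n \<Rightarrow> 'k set \<Rightarrow> real) \<Rightarrow> 'n \<times> 'n \<Rightarrow> 'n \<Rightarrow> real" where
  "pa_to_fa I B x a n = (\<Sum>b\<in>{b\<in>B. disp_origin I b = n}. \<Sum>D\<in>Gfam b a. x a D)"

end

theory Submission
  imports Defs
begin

text \<open>Every constraint of the full aggregation is a sum of constraints of the partial
  aggregation: flow conservation and capacity because they are linear in the flows, and the
  strong linking inequality for K_n because the family G_b^{ij} partitions K_b, so summing the
  linking inequalities of its members gives the bound for K_b, and the K_b with o_b = n
  partition K_n. The converse fails because disaggregated linking inequalities are stronger:
  two unit commodities from a common origin on separate arcs fit under y = 1/2 when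
  aggregated, but each alone needs y = 1.\<close>

lemma Gfam_eq: "Gfam b a = {D. D = dispAgg b a \<and> D \<noteq> {}} \<union> (\<lambda>k. {k}) ` (dispK b - dispAgg b a)"
  by (auto simp: Gfam_def)

lemma sum_Gfam:
  assumes "dispAgg b a \<subseteq> dispK b" and "finite (dispK b)"
  shows "(\<Sum>D\<in>Gfam b a. \<Sum>k\<in>D. f k) = (\<Sum>k\<in>dispK b. f k)"
proof -
  have "(\<Sum>D\<in>Gfam b a. \<Sum>k\<in>D. f k) = (\<Sum>k\<in>\<Union>(Gfam b a). f k)"
    by (rule sum.Union_disjoint[unfolded comp_def, symmetric])
      (use assms in \<open>auto simp: Gfam_eq intro: finite_subset\<close>)
  also have "\<Union>(Gfam b a) = dispK b"
    using assms by (auto simp: Gfam_eq)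
  finally show ?thesis .
qed

lemma Gfam_uniform: "Gfam (K, \<lambda>a. K) a = (if K = {} then {} else {K})"
  by (auto simp: Gfam_def dispK_def dispAgg_def)

definition origin_disp :: "('n, 'k) mcnd \<Rightarrow> 'n \<Rightarrow> ('n, 'k) dispersion" where
  "origin_disp I n = (Kn I n, \<lambda>a. Kn I n)"

lemma full_agg_eq_image: "full_agg I = origin_disp I ` origins I"
  by (auto simp: full_agg_def origin_disp_def)

lemma Kn_nonempty: "n \<in> origins I \<Longrightarrow> Kn I n \<noteq> {}"
  by (auto simp: origins_def Kn_def)

lemma orig_some_Kn:
  assumes "n \<in> origins I"
  shows "orig I (SOME k. k \<in> Kn I n) = n"
proof -
  have "(SOME k. k \<in> Kn I n) \<in> Kn I n"
    using Kn_nonempty[OF assms] by (simp add: some_in_eq)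
  then show ?thesis by (simp add: Kn_def)
qed

lemma inj_on_origin_disp: "inj_on (origin_disp I) (origins I)"
  by (rule inj_onI) (metis origin_disp_def orig_some_Kn fst_conv)

lemma sum_full_agg: "(\<Sum>c\<in>full_agg I. g c) = (\<Sum>n\<in>origins I. g (origin_disp I n))"
  by (simp add: full_agg_eq_image sum.reindex[OF inj_on_origin_disp])

lemma Gfam_origin_disp: "n \<in> origins I \<Longrightarrow> Gfam (origin_disp I n) a = {Kn I n}"
  by (simp add: origin_disp_def Gfam_uniform Kn_nonempty)

lemma full_agg_memberE:
  assumes "c \<in> full_agg I" and "D \<in> Gfam c a"
  obtains n where "n \<in> origins I" and "c = origin_disp I n" and "D = Kn I n"
  using assms by (auto simp: full_agg_eq_image Gfam_origin_disp)

definition disps_from :: "('n, 'k) mcnd \<Rightarrow> ('n, 'k) dispersion set \<Rightarrow> 'n \<Rightarrow> ('n, 'k) dispersion set" where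
  "disps_from I B n = {b \<in> B. disp_origin I b = n}"

lemma pa_to_fa_eq_sum_bflow: "pa_to_fa I B x a n = (\<Sum>b\<in>disps_from I B n. bflow b x a)"
  by (simp add: pa_to_fa_def disps_from_def bflow_def)

text \<open>FA variables are indexed by arbitrary commodity sets D; D is read as K_n for the
  origin n of an arbitrary commodity of D, which is n itself when D = K_n.\<close>
definition fa_of_pa ::
  "('n, 'k) mcnd \<Rightarrow> ('n, 'k) dispersion set \<Rightarrow> ('n \<times> 'n \<Rightarrow> 'k set \<Rightarrow> real) \<Rightarrow> 'n \<times> 'n \<Rightarrow> 'k set \<Rightarrow> real" where
  "fa_of_pa I B x a D = pa_to_fa I B x a (orig I (SOME k. k \<in> D))"

lemma fa_of_pa_Kn: "n \<in> origins I \<Longrightarrow> fa_of_pa I B x a (Kn I n) = pa_to_fa I B x a n"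
  by (simp add: fa_of_pa_def orig_some_Kn)

lemma bflow_fa_of_pa:
  "n \<in> origins I \<Longrightarrow> bflow (origin_disp I n) (fa_of_pa I B x) a = (\<Sum>b\<in>disps_from I B n. bflow b x a)"
  by (simp add: bflow_def Gfam_origin_disp fa_of_pa_Kn pa_to_fa_eq_sum_bflow)

locale partial_aggregation =
  fixes I :: "('n, 'k) mcnd" and B :: "('n, 'k) dispersion set"
  assumes wf: "mcnd_wf I" and agg: "partial_agg I B"
begin

lemma finite_comms: "finite (comms I)"
  using wf by (simp add: mcnd_wf_def)

lemma dispersion: "b \<in> B \<Longrightarrow> is_dispersion I b"
  using agg by (simp add: partial_agg_def)

lemma dispK_subset: "b \<in> B \<Longrightarrow> dispK b \<subseteq> comms I"
  using dispersion by (simp add: is_dispersion_def)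

lemma finite_dispK: "b \<in> B \<Longrightarrow> finite (dispK b)"
  using dispK_subset finite_comms finite_subset by blast

lemma dispAgg_subset: "b \<in> B \<Longrightarrow> a \<in> arcs I \<Longrightarrow> dispAgg b a \<subseteq> dispK b"
  using dispersion by (simp add: is_dispersion_def)

lemma disp_unique: "b \<in> B \<Longrightarrow> b' \<in> B \<Longrightarrow> k \<in> dispK b \<Longrightarrow> k \<in> dispK b' \<Longrightarrow> b = b'"
  using agg dispK_subset unfolding partial_agg_def by blast

lemma disjoint_dispK: "b \<in> B \<Longrightarrow> b' \<in> B \<Longrightarrow> b \<noteq> b' \<Longrightarrow> dispK b \<inter> dispK b' = {}"
  using disp_unique by blast

lemma disp_exists: "k \<in> comms I \<Longrightarrow> \<exists>b\<in>B. k \<in> dispK b"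
  using agg unfolding partial_agg_def by blast

lemma disp_origin_eq:
  assumes "b \<in> B" and "k \<in> dispK b"
  shows "disp_origin I b = orig I k"
proof -
  obtain n where "\<forall>k\<in>dispK b. orig I k = n"
    using dispersion[OF assms(1)] by (auto simp: is_dispersion_def)
  moreover have "(SOME k. k \<in> dispK b) \<in> dispK b"
    using assms(2) by (rule someI)
  ultimately show ?thesis
    using assms(2) by (simp add: disp_origin_def)
qed

lemma disp_origin_in_origins:
  assumes "b \<in> B"
  shows "disp_origin I b \<in> origins I"
proof -
  obtain k where k: "k \<in> dispK b"
    using dispersion[OF assms] by (auto simp: is_dispersion_def)
  then have "k \<in> comms I"
    using dispK_subset[OF assms] by blast
  then show ?thesis
    unfolding origins_def disp_origin_eq[OF assms k] by (rule imageI)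
qed

lemma finite_B: "finite B"
proof -
  let ?pick = "\<lambda>b. SOME k. k \<in> dispK b"
  have pick: "?pick b \<in> dispK b" if "b \<in> B" for b
    using dispersion[OF that] by (simp add: is_dispersion_def some_in_eq)
  have "inj_on ?pick B"
  proof (rule inj_onI)
    fix b b' assume "b \<in> B" "b' \<in> B" "?pick b = ?pick b'"
    then show "b = b'"
      using pick disp_unique by metis
  qed
  moreover have "?pick ` B \<subseteq> comms I"
    using pick dispK_subset by blast
  ultimately show ?thesis
    using finite_comms by (rule inj_on_finite)
qed

lemma Kn_eq_UN_disps_from: "Kn I n = (\<Union>b\<in>disps_from I B n. dispK b)"
proof
  show "Kn I n \<subseteq> (\<Union>b\<in>disps_from I B n. dispK b)"
  proof
    fix k assume "k \<in> Kn I n"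
    then have k: "k \<in> comms I" "orig I k = n"
      by (simp_all add: Kn_def)
    then obtain b where "b \<in> B" "k \<in> dispK b"
      using disp_exists by blast
    with k show "k \<in> (\<Union>b\<in>disps_from I B n. dispK b)"
      unfolding disps_from_def using disp_origin_eq by blast
  qed
  show "(\<Union>b\<in>disps_from I B n. dispK b) \<subseteq> Kn I n"
  proof
    fix k assume "k \<in> (\<Union>b\<in>disps_from I B n. dispK b)"
    then obtain b where b: "b \<in> B" and "disp_origin I b = n" and k: "k \<in> dispK b"
      unfolding disps_from_def by blast
    then show "k \<in> Kn I n"
      using disp_origin_eq[OF b k] dispK_subset[OF b] by (auto simp: Kn_def)
  qed
qed

lemma sum_Kn: "(\<Sum>k\<in>Kn I n. g k) = (\<Sum>b\<in>disps_from I B n. \<Sum>k\<in>dispK b. g k)"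
  unfolding Kn_eq_UN_disps_from
  by (rule sum.UNION_disjoint) (simp_all add: disps_from_def finite_B finite_dispK disjoint_dispK)

lemma sum_origins_disps_from: "(\<Sum>n\<in>origins I. \<Sum>b\<in>disps_from I B n. h b) = (\<Sum>b\<in>B. h b)"
  unfolding disps_from_def
  by (rule sum.group[OF finite_B]) (use finite_comms disp_origin_in_origins in \<open>auto simp: origins_def\<close>)

lemma total_bflow_fa_of_pa: "(\<Sum>c\<in>full_agg I. bflow c (fa_of_pa I B x) a) = (\<Sum>b\<in>B. bflow b x a)"
  by (simp add: sum_full_agg bflow_fa_of_pa sum_origins_disps_from)

lemma pa_lp_obj_fa_of_pa: "pa_lp_obj I (full_agg I) (fa_of_pa I B x) y = pa_lp_obj I B x y"
  by (simp add: pa_lp_obj_def total_bflow_fa_of_pa)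

context
  fixes x y
  assumes feasible: "pa_lp_feasible I B x y"
begin

lemma fa_of_pa_nonneg:
  assumes "a \<in> arcs I" and "c \<in> full_agg I" and "D \<in> Gfam c a"
  shows "0 \<le> fa_of_pa I B x a D"
proof -
  from assms(2,3) obtain n where "n \<in> origins I" and "D = Kn I n"
    by (rule full_agg_memberE)
  then have "fa_of_pa I B x a D = (\<Sum>b\<in>disps_from I B n. bflow b x a)"
    by (simp add: fa_of_pa_Kn pa_to_fa_eq_sum_bflow)
  also have "\<dots> \<ge> 0"
    using feasible assms(1)
    by (auto simp: pa_lp_feasible_def disps_from_def bflow_def intro!: sum_nonneg)
  finally show ?thesis .
qed

lemma fa_of_pa_conservation:
  assumes "c \<in> full_agg I" and "i \<in> nodes I"
  shows "(\<Sum>a\<in>{a\<in>arcs I. fst a = i}. bflow c (fa_of_pa I B x) a)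
           - (\<Sum>a\<in>{a\<in>arcs I. snd a = i}. bflow c (fa_of_pa I B x) a)
         = (\<Sum>k\<in>dispK c. (ind (i = orig I k) - ind (i = dest I k)) * dem I k)"
proof -
  from assms(1) obtain n where n: "n \<in> origins I" and c: "c = origin_disp I n"
    by (auto simp: full_agg_eq_image)
  let ?net = "\<lambda>b. (\<Sum>a\<in>{a\<in>arcs I. fst a = i}. bflow b x a) - (\<Sum>a\<in>{a\<in>arcs I. snd a = i}. bflow b x a)"
  have "(\<Sum>a\<in>{a\<in>arcs I. fst a = i}. bflow c (fa_of_pa I B x) a)
          - (\<Sum>a\<in>{a\<in>arcs I. snd a = i}. bflow c (fa_of_pa I B x) a)
      = (\<Sum>a\<in>{a\<in>arcs I. fst a = i}. \<Sum>b\<in>disps_from I B n. bflow b x a)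
          - (\<Sum>a\<in>{a\<in>arcs I. snd a = i}. \<Sum>b\<in>disps_from I B n. bflow b x a)"
    using n by (simp add: c bflow_fa_of_pa)
  also have "\<dots> = (\<Sum>b\<in>disps_from I B n. ?net b)"
    by (simp add: sum_subtractf sum.swap[of _ "disps_from I B n"])
  also have "\<dots> = (\<Sum>b\<in>disps_from I B n. \<Sum>k\<in>dispK b. (ind (i = orig I k) - ind (i = dest I k)) * dem I k)"
    using feasible assms(2) by (intro sum.cong) (auto simp: pa_lp_feasible_def disps_from_def)
  also have "\<dots> = (\<Sum>k\<in>dispK c. (ind (i = orig I k) - ind (i = dest I k)) * dem I k)"
    by (simp add: c origin_disp_def dispK_def sum_Kn)
  finally show ?thesis .
qed

lemma fa_of_pa_linking:
  assumes "a \<in> arcs I" and "c \<in> full_agg I" and "D \<in> Gfam c a"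
  shows "fa_of_pa I B x a D \<le> (\<Sum>k\<in>D. dem I k) * y a"
proof -
  from assms(2,3) obtain n where "n \<in> origins I" and D: "D = Kn I n"
    by (rule full_agg_memberE)
  then have "fa_of_pa I B x a D = (\<Sum>b\<in>disps_from I B n. \<Sum>D\<in>Gfam b a. x a D)"
    by (simp add: fa_of_pa_Kn pa_to_fa_eq_sum_bflow bflow_def)
  also have "\<dots> \<le> (\<Sum>b\<in>disps_from I B n. \<Sum>D\<in>Gfam b a. (\<Sum>k\<in>D. dem I k) * y a)"
    using feasible assms(1) by (intro sum_mono) (auto simp: pa_lp_feasible_def disps_from_def)
  also have "\<dots> = (\<Sum>b\<in>disps_from I B n. \<Sum>k\<in>dispK b. dem I k) * y a"
    using assms(1) dispAgg_subset finite_dispK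
    by (simp add: sum_distrib_right[symmetric] sum_Gfam disps_from_def)
  also have "\<dots> = (\<Sum>k\<in>D. dem I k) * y a"
    by (simp add: D sum_Kn)
  finally show ?thesis .
qed

lemma pa_lp_feasible_fa_of_pa: "pa_lp_feasible I (full_agg I) (fa_of_pa I B x) y"
  unfolding pa_lp_feasible_def
proof (intro conjI ballI)
  show "0 \<le> y a" and "y a \<le> 1" if "a \<in> arcs I" for a
    using feasible that by (simp_all add: pa_lp_feasible_def)
  show "(\<Sum>c\<in>full_agg I. bflow c (fa_of_pa I B x) a) \<le> cap I a * y a" if "a \<in> arcs I" for a
    using feasible that by (simp add: pa_lp_feasible_def total_bflow_fa_of_pa)
qed (simp_all add: fa_of_pa_nonneg fa_of_pa_conservation fa_of_pa_linking)

end

end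

definition two_sink_instance :: "(nat, nat) mcnd" where
  "two_sink_instance = \<lparr>nodes = {0, 1, 2}, arcs = {(0, 1), (0, 2)}, comms = {0, 1},
     orig = (\<lambda>_. 0), dest = (\<lambda>k. k + 1), dem = (\<lambda>_. 1), cap = (\<lambda>_. 2),
     ucost = (\<lambda>_. 0), fcost = (\<lambda>_. 0)\<rparr>"

definition singleton_agg :: "(nat, nat) dispersion set" where
  "singleton_agg = {({0}, \<lambda>a. {0}), ({1}, \<lambda>a. {1})}"

lemma mcnd_wf_two_sink: "mcnd_wf two_sink_instance"
  by (simp add: mcnd_wf_def two_sink_instance_def)

lemma partial_agg_singleton: "partial_agg two_sink_instance singleton_agg"
  by (auto simp: partial_agg_def is_dispersion_def two_sink_instance_def singleton_agg_def
      dispK_def dispAgg_def)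

lemma full_agg_two_sink: "full_agg two_sink_instance = {({0, 1}, \<lambda>a. {0, 1})}"
proof -
  have "origins two_sink_instance = {0}" and "Kn two_sink_instance 0 = {0, 1}"
    by (auto simp: origins_def Kn_def two_sink_instance_def)
  then show ?thesis
    by (auto simp: full_agg_def)
qed

lemma out_arcs_two_sink:
  "{a \<in> arcs two_sink_instance. fst a = i} = (if i = 0 then {(0, 1), (0, 2)} else {})"
  by (auto simp: two_sink_instance_def)

lemma in_arcs_two_sink:
  "{a \<in> arcs two_sink_instance. snd a = i} = (if i = 1 then {(0, 1)} else if i = 2 then {(0, 2)} else {})"
  by (auto simp: two_sink_instance_def)

lemma fa_feasible_two_sink:
  "pa_lp_feasible two_sink_instance (full_agg two_sink_instance) (\<lambda>a D. 1) (\<lambda>a. 1/2)"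
  by (simp add: pa_lp_feasible_def full_agg_two_sink bflow_def Gfam_uniform out_arcs_two_sink
      in_arcs_two_sink dispK_def, simp add: two_sink_instance_def ind_def)

lemma pa_infeasible_two_sink:
  assumes "\<forall>a\<in>arcs two_sink_instance. y a = 1/2"
  shows "\<not> pa_lp_feasible two_sink_instance singleton_agg x y"
proof
  let ?I = two_sink_instance and ?b = "({0::nat}, \<lambda>a::nat \<times> nat. {0::nat})"
  assume feasible: "pa_lp_feasible ?I singleton_agg x y"
  have Gfam_b: "Gfam ?b a = {{0}}" for a
    by (simp add: Gfam_uniform)
  have b: "?b \<in> singleton_agg" and arc: "(0, 1) \<in> arcs ?I" and node: "1 \<in> nodes ?I"
    by (simp_all add: singleton_agg_def two_sink_instance_def)
  have "(\<Sum>a\<in>{a\<in>arcs ?I. fst a = 1}. bflow ?b x a) - (\<Sum>a\<in>{a\<in>arcs ?I. snd a = 1}. bflow ?b x a)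
      = (\<Sum>k\<in>dispK ?b. (ind (1 = orig ?I k) - ind (1 = dest ?I k)) * dem ?I k)"
    using feasible b node unfolding pa_lp_feasible_def by blast
  then have "x (0, 1) {0} = 1"
    by (simp add: out_arcs_two_sink in_arcs_two_sink bflow_def Gfam_b dispK_def,
        simp add: two_sink_instance_def ind_def)
  moreover have "\<forall>D\<in>Gfam ?b (0, 1). x (0, 1) D \<le> (\<Sum>k\<in>D. dem ?I k) * y (0, 1)"
    using feasible b arc unfolding pa_lp_feasible_def by blast
  ultimately show False
    using assms arc by (simp add: Gfam_b two_sink_instance_def)
qed

theorem theorem4:
  shows "(\<forall>(I :: ('n, 'k) mcnd) B x y.
            mcnd_wf I \<and> partial_agg I B \<and> pa_lp_feasible I B x y \<longrightarrow>
            (\<exists>xf. (\<forall>a\<in>arcs I. \<forall>n\<in>origins I. xf a (Kn I n) = pa_to_fa I B x a n)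
                 \<and> pa_lp_feasible I (full_agg I) xf y
                 \<and> pa_lp_obj I (full_agg I) xf y = pa_lp_obj I B x y))
       \<and> (\<exists>(I :: (nat, nat) mcnd) B xf yf.
            mcnd_wf I \<and> partial_agg I B \<and> pa_lp_feasible I (full_agg I) xf yf
          \<and> \<not> (\<exists>x y. pa_lp_feasible I B x y
                  \<and> (\<forall>a\<in>arcs I. \<forall>n\<in>origins I. xf a (Kn I n) = pa_to_fa I B x a n)
                  \<and> (\<forall>a\<in>arcs I. yf a = y a)))"
proof (intro conjI allI impI)
  fix I :: "('n, 'k) mcnd" and B x y
  assume hyps: "mcnd_wf I \<and> partial_agg I B \<and> pa_lp_feasible I B x y"
  then interpret partial_aggregation I B
    by unfold_locales simp_all
  show "\<exists>xf. (\<forall>a\<in>arcs I. \<forall>n\<in>origins I. xf a (Kn I n) = pa_to_fa I B x a n)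
           \<and> pa_lp_feasible I (full_agg I) xf y \<and> pa_lp_obj I (full_agg I) xf y = pa_lp_obj I B x y"
    using hyps fa_of_pa_Kn pa_lp_feasible_fa_of_pa pa_lp_obj_fa_of_pa
    by (intro exI[of _ "fa_of_pa I B x"]) auto
next
  show "\<exists>(I :: (nat, nat) mcnd) B xf yf.
            mcnd_wf I \<and> partial_agg I B \<and> pa_lp_feasible I (full_agg I) xf yf
          \<and> \<not> (\<exists>x y. pa_lp_feasible I B x y
                  \<and> (\<forall>a\<in>arcs I. \<forall>n\<in>origins I. xf a (Kn I n) = pa_to_fa I B x a n)
                  \<and> (\<forall>a\<in>arcs I. yf a = y a))"
    using mcnd_wf_two_sink partial_agg_singleton fa_feasible_two_sink pa_infeasible_two_sink
    by (intro exI[of _ two_sink_instance] exI[of _ singleton_agg] exI[of _ "\<lambda>a D. 1"]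
        exI[of _ "\<lambda>a. 1/2"]) auto
qed

end
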